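(* Let $n,p\ge1$ be integers and let $\mathbf{A}^{p+1}_{n+1}$ be as defined in the context. Then: (a) for every $a\in A$, $a\vee\sim(a^p)\ge\langle(0,0),p\rangle$ (i.e. $a\vee\sim(a^p)\in\mathrm{Rad}(\mathbf{A}^{p+1}_{n+1})={\uparrow}\langle(0,0),p\rangle$); (b) if $p\le n$, then for every $a\in A$: $a\not\ge\langle(0,0),p\rangle$ if and only if $a^{n+1}=\bot$; (c) if $n<p$, then $\langle(n-1,0),p-1\rangle^{p-1}=\sim\langle(n-1,0),p-1\rangle$, and for every $a\in A$: $a\not\ge\langle(0,0),p\rangle$ if and only if $a^{p}=\bot$.
   Context: Order $\mathbb{Z}\times\mathbb{Z}$ lexicographically: $(m,r)\preccurlyeq(k,s)$ iff $m<k$, or $m=k$ and $r\le s$; addition/subtraction of pairs is componentwise, and $\min,\max$ of pairs refer to $\preccurlyeq$. For an integer $n\ge1$ let $L^\omega_{n+1}=\{(m,r)\in\mathbb{Z}^2:(0,0)\preccurlyeq(m,r)\preccurlyeq(n,0)\}$ with $x\ast y=\max\{(0,0),x+y-(n,0)\}$ and $x\to y=\min\{(n,0),(n,0)-x+y\}$. For an integer $p\ge1$ let $L_{p+1}=\{0,1,\dots,p\}$ with $\alpha\ast\beta=\max\{0,\alpha+\beta-p\}$. Define $$A=A^{p+1}_{n+1}=\{\langle(m,r),\alpha\rangle:(m,r)\in L^\omega_{n+1},\ \alpha\in\{0,p\}\}\cup\{\langle(m,r),\alpha\rangle:(0,0)\preccurlyeq(m,r)\preccurlyeq(n-1,0),\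 0<\alpha<p\}.$$ Order: $\langle(m,r),\alpha\rangle\le\langle(k,s),\beta\rangle$ iff one of: (o1) $\alpha\neq0$, $\alpha\le\beta$ and $(m,r)\preccurlyeq(k,s)$; (o2) $\alpha=\beta=0$ and $(k,s)\preccurlyeq(m,r)$; (o3) $\alpha=0$, $\beta\ne0$ and $(n-1,0)\preccurlyeq(m+k,r+s)$. $\wedge,\vee$ denote meet and join for $\le$. Put $\bot=\langle(n,0),0\rangle$, $\top=\langle(n,0),p\rangle$. For $a=\langle(m,r),\alpha\rangle$, $b=\langle(k,s),\beta\rangle\in A$ define $a\odot b$ by: (P1) if $\alpha,\beta\ge1$ and $\alpha+\beta>p$: $a\odot b=\langle(m,r)\ast(k,s),\alpha+\beta-p\rangle$; (P2) if $\alpha,\beta\ge1$ and $\alpha+\beta\le p$: $a\odot b=\langle\min\{(n,0),(2n-(m+k+1),-(r+s))\},0\rangle$; (P3) if $\alpha\ge1$, $\beta=0$: $a\odot b=\langle(m,r)\to(k,s),0\rangle$, and if $\alpha=0$, $\beta\ge1$: $a\odot b=\langle(k,s)\to(m,r),0\rangle$; (P4) if $\alpha=\beta=0$: $a\odot b=\langle\min\{(n,0),(m+k+1,r+s)\},0\rangle$. Define $\sim\langle(m,r),\alpha\rangle=\langle(m,r),p-\alpha\rangle$ if $\alpha\in\{0,p\}$, and $\sim\langle(m,r),\alpha\rangle=\langle(n-1-m,-r),p-\alpha\rangle$ if $0<\alpha<p$. Define $a\Rightarrow b=\sim(a\odot\sim b)$. The algebra $\mathbf{A}^{p+1}_{n+1}$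 is $\langle A;\odot,\Rightarrow,\wedge,\vee,\bot,\top\rangle$. Powers: $a^0=\top$, $a^{k+1}=a\odot a^k$. $\mathrm{Rad}$ denotes the intersection of the maximal proper implicative filters (subsets containing $\top$, closed under $\odot$, upward closed, different from $A$). *)

theory Defs
  imports Main
begin

type_synonym pr = "int \<times> int"
type_synonym elt = "pr \<times> int"

definition lexle :: "pr \<Rightarrow> pr \<Rightarrow> bool" where
  "lexle x y \<longleftrightarrow> fst x < fst y \<or> (fst x = fst y \<and> snd x \<le> snd y)"

definition lmin :: "pr \<Rightarrow> pr \<Rightarrow> pr" where
  "lmin x y = (if lexle x y then x else y)"

definition lmax :: "pr \<Rightarrow> pr \<Rightarrow> pr" where
  "lmax x y = (if lexle x y then y else x)"

definition padd :: "pr \<Rightarrow> pr \<Rightarrow> pr" where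
  "padd x y = (fst x + fst y, snd x + snd y)"

definition psub :: "pr \<Rightarrow> pr \<Rightarrow> pr" where
  "psub x y = (fst x - fst y, snd x - snd y)"

definition lstar :: "nat \<Rightarrow> pr \<Rightarrow> pr \<Rightarrow> pr" where
  "lstar n x y = lmax (0,0) (psub (padd x y) (int n, 0))"

definition limp :: "nat \<Rightarrow> pr \<Rightarrow> pr \<Rightarrow> pr" where
  "limp n x y = lmin (int n, 0) (padd (psub (int n, 0) x) y)"

definition Acar :: "nat \<Rightarrow> nat \<Rightarrow> elt set" where
  "Acar n p =
     {((m,r),\<alpha>). lexle (0,0) (m,r) \<and> lexle (m,r) (int n, 0) \<and> (\<alpha> = 0 \<or> \<alpha> = int p)}
   \<union> {((m,r),\<alpha>). lexle (0,0) (m,r) \<and> lexle (m,r) (int n - 1, 0) \<and> 0 < \<alpha> \<and> \<alpha> < int p}"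

definition leA :: "nat \<Rightarrow> nat \<Rightarrow> elt \<Rightarrow> elt \<Rightarrow> bool" where
  "leA n p a b = (case a of ((m,r),\<alpha>) \<Rightarrow> case b of ((k,s),\<beta>) \<Rightarrow>
      (\<alpha> \<noteq> 0 \<and> \<alpha> \<le> \<beta> \<and> lexle (m,r) (k,s))
    \<or> (\<alpha> = 0 \<and> \<beta> = 0 \<and> lexle (k,s) (m,r))
    \<or> (\<alpha> = 0 \<and> \<beta> \<noteq> 0 \<and> lexle (int n - 1, 0) (m + k, r + s)))"

definition joinA :: "nat \<Rightarrow> nat \<Rightarrow> elt \<Rightarrow> elt \<Rightarrow> elt" where
  "joinA n p a b = (THE c. c \<in> Acar n p \<and> leA n p a c \<and> leA n p b c \<and>
      (\<forall>d \<in> Acar n p. leA n p a d \<and> leA n p b d \<longrightarrow> leA n p c d))"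

definition botA :: "nat \<Rightarrow> nat \<Rightarrow> elt" where
  "botA n p = ((int n, 0), 0)"

definition topA :: "nat \<Rightarrow> nat \<Rightarrow> elt" where
  "topA n p = ((int n, 0), int p)"

definition odot :: "nat \<Rightarrow> nat \<Rightarrow> elt \<Rightarrow> elt \<Rightarrow> elt" where
  "odot n p a b = (case a of ((m,r),\<alpha>) \<Rightarrow> case b of ((k,s),\<beta>) \<Rightarrow>
     if \<alpha> \<ge> 1 \<and> \<beta> \<ge> 1 \<and> \<alpha> + \<beta> > int p then (lstar n (m,r) (k,s), \<alpha> + \<beta> - int p)
     else if \<alpha> \<ge> 1 \<and> \<beta> \<ge> 1 then
       (lmin (int n, 0) (2 * int n - (m + k + 1), - (r + s)), 0)
     else if \<alpha> \<ge> 1 \<and> \<beta> = 0 then (limp n (m,r) (k,s), 0)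
     else if \<alpha> = 0 \<and> \<beta> \<ge> 1 then (limp n (k,s) (m,r), 0)
     else (lmin (int n, 0) (m + k + 1, r + s), 0))"

definition tildeA :: "nat \<Rightarrow> nat \<Rightarrow> elt \<Rightarrow> elt" where
  "tildeA n p a = (case a of ((m,r),\<alpha>) \<Rightarrow>
     if \<alpha> = 0 \<or> \<alpha> = int p then ((m,r), int p - \<alpha>)
     else ((int n - 1 - m, - r), int p - \<alpha>))"

definition impA :: "nat \<Rightarrow> nat \<Rightarrow> elt \<Rightarrow> elt \<Rightarrow> elt" where
  "impA n p a b = tildeA n p (odot n p a (tildeA n p b))"

fun powA :: "nat \<Rightarrow> nat \<Rightarrow> elt \<Rightarrow> nat \<Rightarrow> elt" where
  "powA n p a 0 = topA n p"
| "powA n p a (Suc k) = odot n p a (powA n p a k)"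

end

theory Submission
  imports Defs
begin

(*
  The radical is the up-set of <(0,0),p>, i.e. the set of elements of level alpha = p.
  Under the product, levels add with a loss of p and collapse to 0 as soon as their sum
  does not exceed p. Hence for non-radical a the level of a^p is 0, so ~(a^p) has level p
  and lies in the radical, which gives (a).
  Powers of radical elements keep level p and never reach bot. Every non-radical element
  lies below g = <(n-1,0),p-1> (below <(0,0),0> if p = 1), whose powers are explicit:
  g^(p+j) = <(min(n, p-1+j),0),0>. As powers are monotone, a^K = bot for every non-radical a
  once K >= max(n+1, p); the choices K = n+1 and K = p give (b) and (c).
*)

(* simp turns comparisons such as 0 < int n into statements about n, which smt must understand *)
declare [[smt_nat_as_int]]

lemma lexle_iff [simp]: "lexle (a, b) (c, d) \<longleftrightarrow> a < c \<or> (a = c \<and> b \<le> d)"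
  by (simp add: lexle_def)

lemma lmin_pair [simp]: "lmin (a, b) (c, d) = (if a < c \<or> (a = c \<and> b \<le> d) then (a, b) else (c, d))"
  by (simp add: lmin_def)

lemma lmax_pair [simp]: "lmax (a, b) (c, d) = (if a < c \<or> (a = c \<and> b \<le> d) then (c, d) else (a, b))"
  by (simp add: lmax_def)

lemma leA_iff [simp]: "leA n p ((m, r), \<alpha>) ((k, s), \<beta>) \<longleftrightarrow>
      (\<alpha> \<noteq> 0 \<and> \<alpha> \<le> \<beta> \<and> lexle (m, r) (k, s))
    \<or> (\<alpha> = 0 \<and> \<beta> = 0 \<and> lexle (k, s) (m, r))
    \<or> (\<alpha> = 0 \<and> \<beta> \<noteq> 0 \<and> lexle (int n - 1, 0) (m + k, r + s))"
  by (simp add: leA_def)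

lemma mem_Acar_iff: "((m, r), \<alpha>) \<in> Acar n p \<longleftrightarrow>
    (0 < m \<or> (m = 0 \<and> 0 \<le> r)) \<and> (m < int n \<or> (m = int n \<and> r \<le> 0)) \<and> 0 \<le> \<alpha> \<and> \<alpha> \<le> int p \<and>
    (0 < \<alpha> \<and> \<alpha> < int p \<longrightarrow> m < int n - 1 \<or> (m = int n - 1 \<and> r \<le> 0))"
  unfolding Acar_def by auto

lemma elt_cases: obtains m r \<alpha> where "a = ((m, r), \<alpha>)"
  by (metis prod.collapse)

lemma leA_refl: "a \<in> Acar n p \<Longrightarrow> leA n p a a"
  by (cases a rule: elt_cases) (simp add: mem_Acar_iff)

lemma leA_trans:
  assumes "a \<in> Acar n p" "b \<in> Acar n p" "c \<in> Acar n p" "leA n p a b" "leA n p b c"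
  shows "leA n p a c"
  using assms
  by (cases a rule: elt_cases; cases b rule: elt_cases; cases c rule: elt_cases)
     (simp only: mem_Acar_iff leA_iff lexle_iff, smt)

lemma leA_antisym:
  assumes "a \<in> Acar n p" "b \<in> Acar n p" "leA n p a b" "leA n p b a"
  shows "a = b"
  using assms
  by (cases a rule: elt_cases; cases b rule: elt_cases)
     (simp only: mem_Acar_iff leA_iff lexle_iff prod.inject, smt)

lemma odot_pos_pos_gt:
  "1 \<le> \<alpha> \<Longrightarrow> 1 \<le> \<beta> \<Longrightarrow> int p < \<alpha> + \<beta> \<Longrightarrow>
   odot n p ((m, r), \<alpha>) ((k, s), \<beta>) = (lmax (0, 0) (m + k - int n, r + s), \<alpha> + \<beta> - int p)"
  by (simp add: odot_def lstar_def padd_def psub_def del: lmax_pair)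

lemma odot_pos_pos_le:
  "1 \<le> \<alpha> \<Longrightarrow> 1 \<le> \<beta> \<Longrightarrow> \<alpha> + \<beta> \<le> int p \<Longrightarrow>
   odot n p ((m, r), \<alpha>) ((k, s), \<beta>) = (lmin (int n, 0) (2 * int n - (m + k + 1), - (r + s)), 0)"
  by (simp add: odot_def del: lmin_pair)

lemma odot_pos_zero:
  "1 \<le> \<alpha> \<Longrightarrow> odot n p ((m, r), \<alpha>) ((k, s), 0) = (lmin (int n, 0) (int n - m + k, s - r), 0)"
  by (simp add: odot_def limp_def padd_def psub_def del: lmin_pair)

lemma odot_zero_pos:
  "1 \<le> \<beta> \<Longrightarrow> odot n p ((m, r), 0) ((k, s), \<beta>) = (lmin (int n, 0) (int n - k + m, r - s), 0)"
  by (simp add: odot_def limp_def padd_def psub_def del: lmin_pair)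

lemma odot_zero_zero:
  "odot n p ((m, r), 0) ((k, s), 0) = (lmin (int n, 0) (m + k + 1, r + s), 0)"
  by (simp add: odot_def del: lmin_pair)

lemmas odot_cases = odot_pos_pos_gt odot_pos_pos_le odot_pos_zero odot_zero_pos odot_zero_zero

lemma odot_commute: "odot n p a b = odot n p b a"
proof -
  obtain m r \<alpha> k s \<beta> where ab: "a = ((m, r), \<alpha>)" "b = ((k, s), \<beta>)"
    by (meson elt_cases)
  show ?thesis
    unfolding ab
    by (cases "1 \<le> \<alpha>"; cases "1 \<le> \<beta>"; cases "int p < \<alpha> + \<beta>"; cases "\<alpha> = 0"; cases "\<beta> = 0")
       (simp_all add: odot_def lstar_def padd_def psub_def add_ac del: lmax_pair lmin_pair)
qed

lemma odot_closed:
  assumes "a \<in> Acar n p" "b \<in> Acar n p"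
  shows "odot n p a b \<in> Acar n p"
proof -
  obtain m r \<alpha> k s \<beta> where ab: "a = ((m, r), \<alpha>)" "b = ((k, s), \<beta>)"
    by (meson elt_cases)
  show ?thesis
    using assms unfolding ab
    by (cases "\<alpha> = 0"; cases "\<beta> = 0"; cases "int p < \<alpha> + \<beta>";
        simp add: odot_cases mem_Acar_iff; smt)
qed

lemma odot_mono_left:
  assumes "a \<in> Acar n p" "b \<in> Acar n p" "c \<in> Acar n p" "leA n p a b"
  shows "leA n p (odot n p a c) (odot n p b c)"
proof -
  obtain m r \<alpha> k s \<beta> u v \<gamma> where abc: "a = ((m, r), \<alpha>)" "b = ((k, s), \<beta>)" "c = ((u, v), \<gamma>)"
    by (meson elt_cases)
  show ?thesis
    using assms unfolding abc
    by (cases "\<alpha> = 0"; cases "\<beta> = 0"; cases "\<gamma> = 0"; cases "int p < \<alpha> + \<gamma>"; cases "int p < \<beta> + \<gamma>";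
        simp add: odot_cases mem_Acar_iff; smt)
qed

lemma topA_mem: "topA n p \<in> Acar n p"
  by (auto simp: topA_def mem_Acar_iff)

lemma leA_botA_imp_eq: "a \<in> Acar n p \<Longrightarrow> leA n p a (botA n p) \<Longrightarrow> a = botA n p"
  by (cases a rule: elt_cases) (auto simp: botA_def mem_Acar_iff)

lemma powA_closed: "a \<in> Acar n p \<Longrightarrow> powA n p a k \<in> Acar n p"
  by (induction k) (simp_all add: topA_mem odot_closed)

lemma powA_mono:
  assumes "a \<in> Acar n p" "b \<in> Acar n p" "leA n p a b"
  shows "leA n p (powA n p a k) (powA n p b k)"
proof (induction k)
  case 0
  show ?case using leA_refl[OF topA_mem] by simp
next
  case (Suc k)
  have ak: "powA n p a k \<in> Acar n p" and bk: "powA n p b k \<in> Acar n p"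
    using assms powA_closed by auto
  have "leA n p (odot n p a (powA n p a k)) (odot n p b (powA n p a k))"
    using odot_mono_left[OF assms(1,2) ak assms(3)] .
  moreover have "leA n p (odot n p b (powA n p a k)) (odot n p b (powA n p b k))"
    using odot_mono_left[OF ak bk assms(2) Suc.IH] by (simp add: odot_commute)
  ultimately show ?case
    using leA_trans odot_closed assms(1,2) ak bk by (metis powA.simps(2))
qed

lemma snd_odot:
  "snd (odot n p a b) =
    (if 1 \<le> snd a \<and> 1 \<le> snd b \<and> int p < snd a + snd b then snd a + snd b - int p else 0)"
  by (cases a rule: elt_cases; cases b rule: elt_cases) (auto simp: odot_def)

lemma snd_powA_radical:
  assumes "snd a = int p" "1 \<le> p"
  shows "snd (powA n p a k) = int p"
  by (induction k) (use assms in \<open>simp_all add: topA_def snd_odot\<close>)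

lemma snd_powA_nonradical:
  assumes "0 \<le> snd a" "snd a < int p"
  shows "snd (powA n p a k) = 0 \<or> (1 \<le> snd (powA n p a k) \<and> snd (powA n p a k) \<le> int p - int k)"
  by (induction k) (use assms in \<open>auto simp: topA_def snd_odot\<close>)

lemma snd_powA_p_nonradical:
  assumes "a \<in> Acar n p" "snd a \<noteq> int p"
  shows "snd (powA n p a p) = 0"
proof -
  have "0 \<le> snd a" "snd a < int p"
    using assms by (cases a rule: elt_cases; simp add: mem_Acar_iff)+
  then show ?thesis
    using snd_powA_nonradical[of a p n p] by auto
qed

lemma snd_tildeA: "snd (tildeA n p a) = int p - snd a"
  by (cases a rule: elt_cases) (simp add: tildeA_def)

lemma tildeA_closed: "a \<in> Acar n p \<Longrightarrow> tildeA n p a \<in> Acar n p"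
  by (cases a rule: elt_cases) (simp add: tildeA_def mem_Acar_iff; smt)

lemma leA_radical_iff:
  assumes "a \<in> Acar n p" "1 \<le> p"
  shows "leA n p ((0, 0), int p) a \<longleftrightarrow> snd a = int p"
  using assms by (cases a rule: elt_cases) (auto simp: mem_Acar_iff)

(* In the mixed cases, (o3) says <(m,r),0> <= <(k,s),beta> iff (k,s) >= (n-1-m,-r). *)
definition joinA_expl :: "nat \<Rightarrow> elt \<Rightarrow> elt \<Rightarrow> elt" where
  "joinA_expl n a b = (case a of ((m, r), \<alpha>) \<Rightarrow> case b of ((k, s), \<beta>) \<Rightarrow>
     if \<alpha> \<noteq> 0 \<and> \<beta> \<noteq> 0 then (lmax (m, r) (k, s), max \<alpha> \<beta>)
     else if \<alpha> = 0 \<and> \<beta> = 0 then (lmin (m, r) (k, s), 0)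
     else if \<alpha> = 0 then (lmax (k, s) (int n - 1 - m, - r), \<beta>)
     else (lmax (m, r) (int n - 1 - k, - s), \<alpha>))"

lemma joinA_expl_upper:
  assumes "a \<in> Acar n p" "b \<in> Acar n p"
  shows "joinA_expl n a b \<in> Acar n p \<and> leA n p a (joinA_expl n a b) \<and> leA n p b (joinA_expl n a b)"
proof -
  obtain m r \<alpha> k s \<beta> where ab: "a = ((m, r), \<alpha>)" "b = ((k, s), \<beta>)"
    by (meson elt_cases)
  show ?thesis
    using assms unfolding ab joinA_expl_def
    by (cases "\<alpha> = 0"; cases "\<beta> = 0"; simp add: mem_Acar_iff; smt)
qed

lemma joinA_expl_least:
  assumes "a \<in> Acar n p" "b \<in> Acar n p" "c \<in> Acar n p" "leA n p a c" "leA n p b c"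
  shows "leA n p (joinA_expl n a b) c"
proof -
  obtain m r \<alpha> k s \<beta> u v \<gamma> where abc: "a = ((m, r), \<alpha>)" "b = ((k, s), \<beta>)" "c = ((u, v), \<gamma>)"
    by (meson elt_cases)
  show ?thesis
    using assms unfolding abc joinA_expl_def
    by (cases "\<alpha> = 0"; cases "\<beta> = 0"; simp add: mem_Acar_iff; smt)
qed

lemma joinA_eq_expl:
  assumes "a \<in> Acar n p" "b \<in> Acar n p"
  shows "joinA n p a b = joinA_expl n a b"
  unfolding joinA_def
proof (rule the_equality)
  show "joinA_expl n a b \<in> Acar n p \<and> leA n p a (joinA_expl n a b) \<and> leA n p b (joinA_expl n a b) \<and>
      (\<forall>d \<in> Acar n p. leA n p a d \<and> leA n p b d \<longrightarrow> leA n p (joinA_expl n a b) d)"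
    using joinA_expl_upper joinA_expl_least assms by blast
next
  fix c
  assume "c \<in> Acar n p \<and> leA n p a c \<and> leA n p b c \<and>
      (\<forall>d \<in> Acar n p. leA n p a d \<and> leA n p b d \<longrightarrow> leA n p c d)"
  then show "c = joinA_expl n a b"
    using leA_antisym joinA_expl_upper joinA_expl_least assms by meson
qed

lemma joinA_upper:
  assumes "a \<in> Acar n p" "b \<in> Acar n p"
  shows "joinA n p a b \<in> Acar n p \<and> leA n p a (joinA n p a b) \<and> leA n p b (joinA n p a b)"
  using joinA_eq_expl joinA_expl_upper assms by simp

lemma powA_max_middle_below_p:
  assumes "k < p"
  shows "powA n p ((int n - 1, 0), int p - 1) k = ((max 0 (int n - int k), 0), int p - int k)"
  using assms
proof (induction k)
  case 0
  then show ?case by (simp add: topA_def)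
next
  case (Suc k)
  then have "1 \<le> int p - 1" "1 \<le> int p - int k" "int p < int p - 1 + (int p - int k)"
    by auto
  with Suc show ?case
    by (simp add: odot_pos_pos_gt; smt)
qed

(* For p = 1 there is no level strictly between 0 and p, and level 0 is ordered reversely. *)
definition nonrad_max :: "nat \<Rightarrow> nat \<Rightarrow> elt" where
  "nonrad_max n p = (if p = 1 then ((0, 0), 0) else ((int n - 1, 0), int p - 1))"

lemma nonrad_max_mem: "1 \<le> n \<Longrightarrow> 1 \<le> p \<Longrightarrow> nonrad_max n p \<in> Acar n p"
  by (auto simp: nonrad_max_def mem_Acar_iff)

lemma leA_nonrad_max:
  assumes "a \<in> Acar n p" "snd a \<noteq> int p" "1 \<le> p"
  shows "leA n p a (nonrad_max n p)"
  using assms by (cases a rule: elt_cases) (simp add: nonrad_max_def mem_Acar_iff; smt)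

lemma odot_nonrad_max_level_zero:
  assumes "0 \<le> x" "1 \<le> p"
  shows "odot n p (nonrad_max n p) ((x, 0), 0) = ((min (int n) (x + 1), 0), 0)"
  using assms by (simp add: nonrad_max_def odot_cases; smt)

lemma powA_nonrad_max:
  assumes "1 \<le> n" "1 \<le> p"
  shows "powA n p (nonrad_max n p) (p + j) = ((min (int n) (int p - 1 + int j), 0), 0)"
proof (induction j)
  case 0
  show ?case
  proof (cases "p = 1")
    case True
    then show ?thesis by (simp add: nonrad_max_def topA_def odot_cases)
  next
    case False
    then have "p = Suc (p - 1)" "2 \<le> p"
      using assms by auto
    then have "powA n p (nonrad_max n p) p
        = odot n p ((int n - 1, 0), int p - 1) (powA n p ((int n - 1, 0), int p - 1) (p - 1))"
      using False by (metis nonrad_max_def powA.simps(2))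
    also have "\<dots> = odot n p ((int n - 1, 0), int p - 1) ((max 0 (int n - (int p - 1)), 0), 1)"
      using powA_max_middle_below_p[of "p - 1" p n] \<open>2 \<le> p\<close> by (simp add: of_nat_diff)
    also have "\<dots> = ((min (int n) (int p - 1), 0), 0)"
      using \<open>2 \<le> p\<close> by (simp add: odot_pos_pos_le; smt)
    finally show ?thesis
      by simp
  qed
next
  case (Suc j)
  then show ?case
    using assms by (simp add: odot_nonrad_max_level_zero; smt)
qed

lemma powA_nonradical_eq_botA:
  assumes "a \<in> Acar n p" "snd a \<noteq> int p" "1 \<le> n" "1 \<le> p" "n + 1 \<le> K" "p \<le> K"
  shows "powA n p a K = botA n p"
proof -
  have "powA n p (nonrad_max n p) K = ((min (int n) (int K - 1), 0), 0)"
    using powA_nonrad_max[OF assms(3,4), of "K - p"] assms(6) by (simp add: of_nat_diff)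
  also have "\<dots> = botA n p"
    using assms(5) by (simp add: botA_def)
  finally have "powA n p (nonrad_max n p) K = botA n p" .
  moreover have "leA n p (powA n p a K) (powA n p (nonrad_max n p) K)"
    using powA_mono leA_nonrad_max nonrad_max_mem assms by blast
  ultimately show ?thesis
    using leA_botA_imp_eq powA_closed assms(1) by metis
qed

lemma not_leA_radical_iff_powA_eq_botA:
  assumes "a \<in> Acar n p" "1 \<le> n" "1 \<le> p" "n + 1 \<le> K" "p \<le> K"
  shows "\<not> leA n p ((0, 0), int p) a \<longleftrightarrow> powA n p a K = botA n p"
proof -
  have "powA n p a K \<noteq> botA n p" if "snd a = int p"
    using snd_powA_radical[OF that assms(3), of n K] assms(3) by (auto simp: botA_def)
  then show ?thesis
    using leA_radical_iff[OF assms(1,3)] powA_nonradical_eq_botA[OF assms(1) _ assms(2-5)] by blast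
qed

lemma radical_le_join_tildeA_powA:
  assumes "a \<in> Acar n p" "1 \<le> p"
  shows "leA n p ((0, 0), int p) (joinA n p a (tildeA n p (powA n p a p)))"
proof -
  let ?b = "tildeA n p (powA n p a p)"
  have b: "?b \<in> Acar n p"
    using tildeA_closed powA_closed assms(1) by blast
  have rad: "((0, 0), int p) \<in> Acar n p"
    using assms(2) by (auto simp: mem_Acar_iff)
  have "leA n p ((0, 0), int p) a \<or> leA n p ((0, 0), int p) ?b"
  proof (cases "snd a = int p")
    case True
    then show ?thesis using leA_radical_iff assms by blast
  next
    case False
    then have "snd (powA n p a p) = 0"
      using snd_powA_p_nonradical assms(1) by blast
    then show ?thesis
      using leA_radical_iff[OF b assms(2)] by (simp add: snd_tildeA)
  qed
  then show ?thesis
    using leA_trans[OF rad] joinA_upper[OF assms(1) b] assms(1) b by blast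
qed

theorem theorem3p4:
  fixes n p :: nat
  assumes "n \<ge> 1" and "p \<ge> 1"
  shows "(\<forall>a \<in> Acar n p. leA n p ((0,0), int p) (joinA n p a (tildeA n p (powA n p a p))))
       \<and> (p \<le> n \<longrightarrow> (\<forall>a \<in> Acar n p.
             \<not> leA n p ((0,0), int p) a \<longleftrightarrow> powA n p a (n + 1) = botA n p))
       \<and> (n < p \<longrightarrow>
             powA n p ((int n - 1, 0), int p - 1) (p - 1) = tildeA n p ((int n - 1, 0), int p - 1)
           \<and> (\<forall>a \<in> Acar n p. \<not> leA n p ((0,0), int p) a \<longleftrightarrow> powA n p a p = botA n p))"
proof (intro conjI impI ballI)
  fix a
  assume "a \<in> Acar n p"
  then show "leA n p ((0,0), int p) (joinA n p a (tildeA n p (powA n p a p)))"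
    using radical_le_join_tildeA_powA assms by blast
next
  fix a
  assume "p \<le> n" "a \<in> Acar n p"
  then show "\<not> leA n p ((0,0), int p) a \<longleftrightarrow> powA n p a (n + 1) = botA n p"
    using not_leA_radical_iff_powA_eq_botA[of a n p "n + 1"] assms by simp
next
  assume "n < p"
  then show "powA n p ((int n - 1, 0), int p - 1) (p - 1) = tildeA n p ((int n - 1, 0), int p - 1)"
    using powA_max_middle_below_p[of "p - 1" p n] assms by (simp add: tildeA_def of_nat_diff)
next
  fix a
  assume "n < p" "a \<in> Acar n p"
  then show "\<not> leA n p ((0,0), int p) a \<longleftrightarrow> powA n p a p = botA n p"
    using not_leA_radical_iff_powA_eq_botA[of a n p p] assms by simp
qed

end
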